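(* Let $a<b$ be real numbers, let $M\colon[a,b]\to\mathbb{R}$ be non-decreasing, and let $N\colon[M(a),M(b)]\to\mathbb{R}$ be non-decreasing. Let $\Lambda=N\circ M\colon[a,b]\to\mathbb{R}$, let $\lambda$ be the measure on $[a,b]$ corresponding to $\Lambda$, and let $\nu$ be the measure on $[M(a),M(b)]$ corresponding to $N$. Let \[H=\{y\in[M(a),M(b)] : M^{-1}[\{y\}]\text{ contains more than one point}\},\] and let $\Xi\colon[M(a),M(b)]\to[a,b]$ be defined by $\Xi(y)=\sup\{x\in[a,b]: M(x)\le y\}$. Suppose that $N$ is left-continuous at $y$ for each $y\in H$ (where, by convention, $N$ is considered left-continuous at $M(a)$, with $N(M(a)-)=N(M(a))$). Then $\lambda$ is the image measure of $\nu$ under $\Xi$, i.e. $\lambda(E)=\nu(\Xi^{-1}[E])$ for every Borel set $E\subseteq[a,b]$, and for each bounded Borel function $f\colon[a,b]\to\mathbb{R}$, \[\int_a^b f(x)\,dN(M(x))=\int_{M(a)}^{M(b)} f(\Xi(y))\,dN(y).\]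
   Context: "Non-decreasing" is what the paper calls increasing. For a non-decreasing function $F\colon[c,d]\to\mathbb{R}$, the measure corresponding to $F$ is the unique Borel measure $\mu$ on $[c,d]$ such that for every continuous $f\colon[c,d]\to\mathbb{R}$, $\int_{[c,d]} f\,d\mu$ equals the Riemann–Stieltjes integral $\int_c^d f(x)\,dF(x)$. For a bounded Borel function $f$, the Lebesgue–Stieltjes integral $\int_c^d f(x)\,dF(x)$ is defined as $\int_{[c,d]} f\,d\mu$. The notation $\int_a^b f(x)\,dN(M(x))$ means $\int_a^b f(x)\,d\Lambda(x)$ with $\Lambda=N\circ M$. *)

theory Defs
  imports "HOL-Analysis.Analysis"
begin

definition has_rs_integral ::
  "real \<Rightarrow> real \<Rightarrow> (real \<Rightarrow> real) \<Rightarrow> (real \<Rightarrow> real) \<Rightarrow> real \<Rightarrow> bool" where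
  "has_rs_integral c d f F I \<longleftrightarrow>
     (\<forall>\<epsilon>>0. \<exists>\<delta>>0. \<forall>(n::nat) (x::nat \<Rightarrow> real) (t::nat \<Rightarrow> real).
        x 0 = c \<longrightarrow> x n = d \<longrightarrow>
        (\<forall>i<n. x i < x (Suc i) \<and> x (Suc i) - x i < \<delta> \<and> x i \<le> t i \<and> t i \<le> x (Suc i)) \<longrightarrow>
        \<bar>(\<Sum>i<n. f (t i) * (F (x (Suc i)) - F (x i))) - I\<bar> < \<epsilon>)"

definition corr_measure :: "real \<Rightarrow> real \<Rightarrow> (real \<Rightarrow> real) \<Rightarrow> real measure" where
  "corr_measure c d F = (THE \<mu>. sets \<mu> = sets (restrict_space borel {c..d}) \<and>
      finite_measure \<mu> \<and>
      (\<forall>f. continuous_on {c..d} f \<longrightarrow> has_rs_integral c d f F (integral\<^sup>L \<mu> f)))"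

end

theory Submission
  imports Defs
begin

text \<open>The measure of a non-decreasing F on [c,d] is the image of Lebesgue measure on [F c, F d)
  under any map K with K s \<in> [x,y] whenever F x \<le> s < F y: the Riemann--Stieltjes sums of a
  continuous g are then integrals of step functions uniformly close to g \<circ> K. The generalised
  inverse G of N is such a map for N, so \<nu> is the image of Lebesgue measure under G.
  Left-continuity of N on H makes \<Xi> \<circ> G such a map for N \<circ> M, so \<lambda> is the image of
  Lebesgue measure under \<Xi> \<circ> G, that is, the image of \<nu> under \<Xi>.\<close>

section \<open>Uniqueness of the measure corresponding to a non-decreasing function\<close>

lemma fine_partition_exists:
  fixes c d \<delta> :: real
  assumes "c \<le> d" "\<delta> > 0"
  obtains n x where "x 0 = c" "x n = d" "\<And>i. i < n \<Longrightarrow> x i < x (Suc i) \<and> x (Suc i) - x i < \<delta>"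
proof (cases "c = d")
  case True
  show ?thesis by (rule that[where n=0 and x="\<lambda>_. c"]) (use True in auto)
next
  case False
  define n :: nat where "n = nat \<lceil>(d - c) / \<delta>\<rceil> + 1"
  have n_pos: "real n > 0" by (simp add: n_def)
  have "(d - c) / \<delta> < real n" unfolding n_def by linarith
  then have step: "(d - c) / real n < \<delta>"
    using n_pos assms(2) by (simp add: field_simps)
  have step_eq: "c + (d - c) * real (Suc i) / real n - (c + (d - c) * real i / real n) = (d - c) / real n"
    for i using n_pos by (simp add: field_simps)
  have "(d - c) / real n > 0" using False assms(1) n_pos by simp
  show ?thesis
  proof (rule that[where n=n and x="\<lambda>i. c + (d - c) * real i / real n"])
    fix i
    show "c + (d - c) * real i / real n < c + (d - c) * real (Suc i) / real n \<and>
      c + (d - c) * real (Suc i) / real n - (c + (d - c) * real i / real n) < \<delta>"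
      using step_eq[of i] step \<open>(d - c) / real n > 0\<close> by linarith
  qed (use n_pos in auto)
qed

lemma has_rs_integral_unique:
  assumes "c \<le> d" "has_rs_integral c d f F I" "has_rs_integral c d f F J"
  shows "I = J"
proof (rule ccontr)
  assume "I \<noteq> J"
  then have e: "\<bar>I - J\<bar> / 2 > 0" by simp
  obtain \<delta>1 where "\<delta>1 > 0" and close_I: "\<And>n x t. x 0 = c \<Longrightarrow> x n = d \<Longrightarrow>
        \<forall>i<n. x i < x (Suc i) \<and> x (Suc i) - x i < \<delta>1 \<and> x i \<le> t i \<and> t i \<le> x (Suc i) \<Longrightarrow>
        \<bar>(\<Sum>i<n. f (t i) * (F (x (Suc i)) - F (x i))) - I\<bar> < \<bar>I - J\<bar> / 2"
    using assms(2) e unfolding has_rs_integral_def by blast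
  obtain \<delta>2 where "\<delta>2 > 0" and close_J: "\<And>n x t. x 0 = c \<Longrightarrow> x n = d \<Longrightarrow>
        \<forall>i<n. x i < x (Suc i) \<and> x (Suc i) - x i < \<delta>2 \<and> x i \<le> t i \<and> t i \<le> x (Suc i) \<Longrightarrow>
        \<bar>(\<Sum>i<n. f (t i) * (F (x (Suc i)) - F (x i))) - J\<bar> < \<bar>I - J\<bar> / 2"
    using assms(3) e unfolding has_rs_integral_def by blast
  have "min \<delta>1 \<delta>2 > 0" using \<open>\<delta>1 > 0\<close> \<open>\<delta>2 > 0\<close> by simp
  then obtain n x where part: "x 0 = c" "x n = d"
    "\<And>i. i < n \<Longrightarrow> x i < x (Suc i) \<and> x (Suc i) - x i < min \<delta>1 \<delta>2"
    by (rule fine_partition_exists[OF assms(1)]) blast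
  have "\<bar>(\<Sum>i<n. f (x i) * (F (x (Suc i)) - F (x i))) - I\<bar> < \<bar>I - J\<bar> / 2"
    by (rule close_I) (use part less_imp_le in auto)
  moreover have "\<bar>(\<Sum>i<n. f (x i) * (F (x (Suc i)) - F (x i))) - J\<bar> < \<bar>I - J\<bar> / 2"
    by (rule close_J) (use part less_imp_le in auto)
  ultimately show False by (auto simp: abs_if split: if_split_asm)
qed

lemma integral_ramp_tendsto_measure:
  assumes sets: "sets \<mu> = sets (restrict_space borel {c..d::real})" and "finite_measure \<mu>"
  shows "(\<lambda>n. integral\<^sup>L \<mu> (\<lambda>t. min 1 (max 0 (real n * (t - x)))))
     \<longlonglongrightarrow> measure \<mu> ({x<..} \<inter> space \<mu>)"
proof -
  interpret finite_measure \<mu> by fact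
  have meas: "f \<in> borel_measurable \<mu>" if "f \<in> borel_measurable borel" for f :: "real \<Rightarrow> real"
    unfolding measurable_cong_sets[OF sets refl] using that by (rule measurable_restrict_space1)
  have ramp_lim: "(\<lambda>n. min 1 (max 0 (real n * (t - x)))) \<longlonglongrightarrow> indicator {x<..} t" for t
  proof (cases "t > x")
    case True
    obtain N :: nat where N: "real N > 1 / (t - x)" using reals_Archimedean2 by blast
    have "min 1 (max 0 (real n * (t - x))) = 1" if "n \<ge> N" for n
    proof -
      have "real n > 1 / (t - x)" using N that by linarith
      then show ?thesis using True by (simp add: field_simps)
    qed
    then have "eventually (\<lambda>n. min 1 (max 0 (real n * (t - x))) = 1) sequentially"
      unfolding eventually_sequentially by blast
    then show ?thesis using True by (simp add: tendsto_eventually)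
  next
    case False
    then show ?thesis by (simp add: mult_nonneg_nonpos)
  qed
  have "(\<lambda>n. integral\<^sup>L \<mu> (\<lambda>t. min 1 (max 0 (real n * (t - x))))) \<longlonglongrightarrow> integral\<^sup>L \<mu> (indicator {x<..})"
    by (rule integral_dominated_convergence[where w="\<lambda>_. 1"])
      (use ramp_lim in \<open>auto intro!: meas\<close>)
  then show ?thesis by simp
qed

lemma finite_measure_eqI_continuous_integrals:
  assumes sets1: "sets \<mu>1 = sets (restrict_space borel {c..d::real})"
    and sets2: "sets \<mu>2 = sets (restrict_space borel {c..d})"
    and fin1: "finite_measure \<mu>1" and fin2: "finite_measure \<mu>2"
    and eq: "\<And>f. continuous_on {c..d} f \<Longrightarrow> integral\<^sup>L \<mu>1 f = integral\<^sup>L \<mu>2 (f :: real \<Rightarrow> real)"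
  shows "\<mu>1 = \<mu>2"
proof -
  have space1: "space \<mu>1 = {c..d}" using sets_eq_imp_space_eq[OF sets1] by simp
  have space2: "space \<mu>2 = {c..d}" using sets_eq_imp_space_eq[OF sets2] by simp
  have measure_eq: "measure \<mu>1 ({x<..} \<inter> {c..d}) = measure \<mu>2 ({x<..} \<inter> {c..d})" for x
  proof -
    have "continuous_on {c..d} (\<lambda>t. min 1 (max 0 (real n * (t - x))))" for n
      by (intro continuous_intros)
    then have "(\<lambda>n. integral\<^sup>L \<mu>1 (\<lambda>t. min 1 (max 0 (real n * (t - x)))))
        \<longlonglongrightarrow> measure \<mu>2 ({x<..} \<inter> {c..d})"
      using integral_ramp_tendsto_measure[OF sets2 fin2, of x] by (simp add: eq space2)
    moreover have "(\<lambda>n. integral\<^sup>L \<mu>1 (\<lambda>t. min 1 (max 0 (real n * (t - x)))))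
        \<longlonglongrightarrow> measure \<mu>1 ({x<..} \<inter> {c..d})"
      using integral_ramp_tendsto_measure[OF sets1 fin1, of x] by (simp add: space1)
    ultimately show ?thesis using LIMSEQ_unique by blast
  qed
  have id1: "(\<lambda>t. t) \<in> measurable \<mu>1 borel"
    unfolding measurable_cong_sets[OF sets1 refl] by (rule measurable_restrict_space1) simp
  have id2: "(\<lambda>t. t) \<in> measurable \<mu>2 borel"
    unfolding measurable_cong_sets[OF sets2 refl] by (rule measurable_restrict_space1) simp
  have distr_eq: "distr \<mu>1 borel (\<lambda>t. t) = distr \<mu>2 borel (\<lambda>t. t)"
  proof (rule measure_eqI_lessThan)
    fix x :: real
    have e1: "emeasure (distr \<mu>1 borel (\<lambda>t. t)) {x<..} = measure \<mu>1 ({x<..} \<inter> {c..d})"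
      using id1 by (simp add: emeasure_distr space1 finite_measure.emeasure_eq_measure[OF fin1])
    have e2: "emeasure (distr \<mu>2 borel (\<lambda>t. t)) {x<..} = measure \<mu>2 ({x<..} \<inter> {c..d})"
      using id2 by (simp add: emeasure_distr space2 finite_measure.emeasure_eq_measure[OF fin2])
    show "emeasure (distr \<mu>1 borel (\<lambda>t. t)) {x<..} < \<infinity>" using e1 by simp
    show "emeasure (distr \<mu>1 borel (\<lambda>t. t)) {x<..} = emeasure (distr \<mu>2 borel (\<lambda>t. t)) {x<..}"
      using e1 e2 measure_eq by simp
  qed simp_all
  show ?thesis
  proof (rule measure_eqI)
    show "sets \<mu>1 = sets \<mu>2" using sets1 sets2 by simp
    fix A assume "A \<in> sets \<mu>1"
    then have "A \<in> sets borel" "A \<subseteq> {c..d}"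
      using sets1 sets_restrict_space_iff[of "{c..d}" borel A] by auto
    then show "emeasure \<mu>1 A = emeasure \<mu>2 A"
      using emeasure_distr[OF id1, of A] emeasure_distr[OF id2, of A] distr_eq
      by (simp add: space1 space2 Int_absorb2)
  qed
qed

lemma corr_measure_eqI:
  assumes "c \<le> d" "sets \<mu> = sets (restrict_space borel {c..d})" "finite_measure \<mu>"
    and rs: "\<And>f. continuous_on {c..d} f \<Longrightarrow> has_rs_integral c d f F (integral\<^sup>L \<mu> f)"
  shows "corr_measure c d F = \<mu>"
  unfolding corr_measure_def
proof (rule the_equality)
  fix \<mu>' assume \<mu>': "sets \<mu>' = sets (restrict_space borel {c..d}) \<and> finite_measure \<mu>' \<and>
    (\<forall>f. continuous_on {c..d} f \<longrightarrow> has_rs_integral c d f F (integral\<^sup>L \<mu>' f))"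
  show "\<mu>' = \<mu>"
    using \<mu>' assms has_rs_integral_unique[OF \<open>c \<le> d\<close>]
    by (intro finite_measure_eqI_continuous_integrals[of \<mu>' c d \<mu>]) auto
qed (use assms in auto)

section \<open>Riemann--Stieltjes sums as integrals of step functions\<close>

lemma lift_Suc_mono_le_bounded:
  fixes y :: "nat \<Rightarrow> 'a::order"
  assumes "\<And>i. i < n \<Longrightarrow> y i \<le> y (Suc i)" "i \<le> j" "j \<le> n"
  shows "y i \<le> y j"
  by (rule lift_Suc_mono_le_ivl[of "{..<n}"]) (use assms in auto)

lemma sum_indicator_chain:
  fixes y :: "nat \<Rightarrow> real"
  assumes "\<And>i. i < n \<Longrightarrow> y i \<le> y (Suc i)"
  shows "(\<Sum>i<n. indicator {y i..<y (Suc i)} s :: real) = indicator {y 0..<y n} s"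
  using assms
proof (induction n)
  case (Suc n)
  have "y 0 \<le> y n" using Suc.prems by (rule lift_Suc_mono_le_bounded) auto
  moreover have "y n \<le> y (Suc n)" using Suc.prems by simp
  moreover have "(\<Sum>i<n. indicator {y i..<y (Suc i)} s :: real) = indicator {y 0..<y n} s"
    using Suc by simp
  ultimately show ?case by (simp add: indicator_def)
qed simp

lemma step_function_dist_le:
  fixes y w :: "nat \<Rightarrow> real"
  assumes "\<And>i. i < n \<Longrightarrow> y i \<le> y (Suc i)" "s \<in> {y 0..<y n}"
    and close: "\<And>i. i < n \<Longrightarrow> s \<in> {y i..<y (Suc i)} \<Longrightarrow> \<bar>w i - h\<bar> \<le> e"
  shows "\<bar>(\<Sum>i<n. w i * indicator {y i..<y (Suc i)} s) - h\<bar> \<le> e"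
proof -
  have one: "(\<Sum>i<n. indicator {y i..<y (Suc i)} s :: real) = 1"
    using sum_indicator_chain[of n y s] assms(1,2) by simp
  have "\<bar>(\<Sum>i<n. w i * indicator {y i..<y (Suc i)} s) - h\<bar>
      = \<bar>\<Sum>i<n. (w i - h) * indicator {y i..<y (Suc i)} s\<bar>"
    using one by (simp add: left_diff_distrib sum_subtractf flip: sum_distrib_left)
  also have "\<dots> \<le> (\<Sum>i<n. \<bar>(w i - h) * indicator {y i..<y (Suc i)} s\<bar>)"
    by (rule sum_abs)
  also have "\<dots> \<le> (\<Sum>i<n. e * indicator {y i..<y (Suc i)} s)"
    using close by (intro sum_mono) (simp add: indicator_def abs_mult)
  also have "\<dots> = e" using one by (simp flip: sum_distrib_left)
  finally show ?thesis .
qed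

lemma integral_step_function_chain:
  fixes y w :: "nat \<Rightarrow> real"
  assumes mono: "\<And>i. i < n \<Longrightarrow> y i \<le> y (Suc i)"
  defines "L \<equiv> restrict_space lborel {y 0..<y n}"
  shows "integrable L (\<lambda>s. \<Sum>i<n. w i * indicator {y i..<y (Suc i)} s)"
    and "integral\<^sup>L L (\<lambda>s. \<Sum>i<n. w i * indicator {y i..<y (Suc i)} s)
      = (\<Sum>i<n. w i * (y (Suc i) - y i))"
proof -
  have sub: "{y i..<y (Suc i)} \<subseteq> {y 0..<y n}" if "i < n" for i
    using lift_Suc_mono_le_bounded[of n y 0 i] lift_Suc_mono_le_bounded[of n y "Suc i" n]
      mono that by fastforce
  have emeasure_L: "emeasure L {y i..<y (Suc i)} = ennreal (y (Suc i) - y i)" if "i < n" for i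
    using sub[OF that] mono[OF that] by (simp add: L_def emeasure_restrict_space)
  have sets_L: "{y i..<y (Suc i)} \<in> sets L" if "i < n" for i
    using sub[OF that] by (simp add: L_def sets_restrict_space_iff)
  have int: "integrable L (indicator {y i..<y (Suc i)} :: real \<Rightarrow> real)" if "i < n" for i
    using emeasure_L[OF that] sets_L[OF that] by (intro integrable_real_indicator) auto
  have val: "integral\<^sup>L L (indicator {y i..<y (Suc i)} :: real \<Rightarrow> real) = y (Suc i) - y i"
    if "i < n" for i
    using emeasure_L[OF that] sets_L[OF that] mono[OF that] by (simp add: measure_def)
  show "integrable L (\<lambda>s. \<Sum>i<n. w i * indicator {y i..<y (Suc i)} s)"
    using int by (intro Bochner_Integration.integrable_sum integrable_mult_right) auto
  show "integral\<^sup>L L (\<lambda>s. \<Sum>i<n. w i * indicator {y i..<y (Suc i)} s)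
      = (\<Sum>i<n. w i * (y (Suc i) - y i))"
    using int val by (subst Bochner_Integration.integral_sum) auto
qed

lemma finite_measure_restrict_lborel_Ico: "finite_measure (restrict_space lborel {A..<B::real})"
  by (rule finite_measureI) (cases "A \<le> B"; simp add: emeasure_restrict_space)

lemma integral_interval_dist_le:
  fixes f h :: "real \<Rightarrow> real" and A B e :: real
  defines "L \<equiv> restrict_space lborel {A..<B}"
  assumes "integrable L f" "integrable L h" "\<And>s. s \<in> {A..<B} \<Longrightarrow> \<bar>f s - h s\<bar> \<le> e" "e \<ge> 0"
  shows "\<bar>integral\<^sup>L L f - integral\<^sup>L L h\<bar> \<le> e * \<bar>B - A\<bar>"
proof -
  have "\<bar>integral\<^sup>L L f - integral\<^sup>L L h\<bar> \<le> integral\<^sup>L L (\<lambda>s. norm (f s - h s))"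
    using integral_norm_bound[of L "\<lambda>s. f s - h s"] assms(2,3) by simp
  also have "\<dots> \<le> integral\<^sup>L L (\<lambda>s. e)"
    using assms finite_measure.integrable_const[OF finite_measure_restrict_lborel_Ico]
    by (intro integral_mono) (auto simp: L_def)
  also have "\<dots> = e * measure L {A..<B}" by (simp add: L_def)
  also have "\<dots> \<le> e * \<bar>B - A\<bar>"
    using \<open>e \<ge> 0\<close> by (cases "A \<le> B") (auto simp: L_def measure_def emeasure_restrict_space intro!: mult_left_mono)
  finally show ?thesis .
qed

lemma rs_sum_dist_integral_image_le:
  fixes F K g :: "real \<Rightarrow> real" and c d e \<delta> :: real and x t :: "nat \<Rightarrow> real"
  defines "L \<equiv> restrict_space lborel {F c..<F d}"
  assumes mono: "mono_on {c..d} F"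
    and K_in: "\<And>s. s \<in> {F c..<F d} \<Longrightarrow> K s \<in> {c..d}"
    and K_between: "\<And>x y s. c \<le> x \<Longrightarrow> x \<le> y \<Longrightarrow> y \<le> d \<Longrightarrow> F x \<le> s \<Longrightarrow> s < F y \<Longrightarrow> K s \<in> {x..y}"
    and int_gK: "integrable L (\<lambda>s. g (K s))"
    and osc: "\<And>u v. u \<in> {c..d} \<Longrightarrow> v \<in> {c..d} \<Longrightarrow> \<bar>u - v\<bar> < \<delta> \<Longrightarrow> \<bar>g u - g v\<bar> \<le> e" "e \<ge> 0"
    and "x 0 = c" "x n = d"
    and part: "\<forall>i<n. x i < x (Suc i) \<and> x (Suc i) - x i < \<delta> \<and> x i \<le> t i \<and> t i \<le> x (Suc i)"
  shows "\<bar>(\<Sum>i<n. g (t i) * (F (x (Suc i)) - F (x i))) - integral\<^sup>L L (\<lambda>s. g (K s))\<bar> \<le> e * \<bar>F d - F c\<bar>"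
proof -
  have x_in: "x i \<in> {c..d}" if "i \<le> n" for i
    using lift_Suc_mono_le_bounded[of n x 0 i] lift_Suc_mono_le_bounded[of n x i n]
      part that \<open>x 0 = c\<close> \<open>x n = d\<close> by force
  define y where "y i = F (x i)" for i
  have y_mono: "y i \<le> y (Suc i)" if "i < n" for i
    unfolding y_def using x_in[of i] x_in[of "Suc i"] that part
    by (intro mono_onD[OF mono]) auto
  have y_ends: "{y 0..<y n} = {F c..<F d}" using \<open>x 0 = c\<close> \<open>x n = d\<close> by (simp add: y_def)
  define \<phi> where "\<phi> s = (\<Sum>i<n. g (t i) * indicator {y i..<y (Suc i)} s)" for s
  have close: "\<bar>\<phi> s - g (K s)\<bar> \<le> e" if "s \<in> {F c..<F d}" for s
    unfolding \<phi>_def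
  proof (rule step_function_dist_le[of n y, OF y_mono])
    fix i assume i: "i < n" and s: "s \<in> {y i..<y (Suc i)}"
    have "K s \<in> {x i..x (Suc i)}"
      using K_between[of "x i" "x (Suc i)" s] x_in[of i] x_in[of "Suc i"] i part s
      by (auto simp: y_def)
    moreover have "t i \<in> {x i..x (Suc i)}" "x (Suc i) - x i < \<delta>" "x i \<in> {c..d}" "x (Suc i) \<in> {c..d}"
      using part i x_in[of i] x_in[of "Suc i"] by auto
    ultimately show "\<bar>g (t i) - g (K s)\<bar> \<le> e"
      by (intro osc) auto
  qed (use that y_ends in auto)
  have "\<bar>integral\<^sup>L L \<phi> - integral\<^sup>L L (\<lambda>s. g (K s))\<bar> \<le> e * \<bar>F d - F c\<bar>"
    using integral_step_function_chain(1)[of n y, OF y_mono] int_gK close \<open>e \<ge> 0\<close>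
    unfolding L_def \<phi>_def y_ends by (intro integral_interval_dist_le) auto
  moreover have "integral\<^sup>L L \<phi> = (\<Sum>i<n. g (t i) * (F (x (Suc i)) - F (x i)))"
    using integral_step_function_chain(2)[of n y, OF y_mono, of "\<lambda>i. g (t i)"]
    unfolding L_def \<phi>_def y_ends by (simp add: y_def)
  ultimately show ?thesis by simp
qed

lemma has_rs_integral_image_lebesgue:
  fixes F K g :: "real \<Rightarrow> real"
  assumes mono: "mono_on {c..d} F"
    and K_meas: "K \<in> borel_measurable (restrict_space lborel {F c..<F d})"
    and K_in: "\<And>s. s \<in> {F c..<F d} \<Longrightarrow> K s \<in> {c..d}"
    and K_between: "\<And>x y s. c \<le> x \<Longrightarrow> x \<le> y \<Longrightarrow> y \<le> d \<Longrightarrow> F x \<le> s \<Longrightarrow> s < F y \<Longrightarrow> K s \<in> {x..y}"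
    and g: "continuous_on {c..d} g"
  shows "has_rs_integral c d g F (integral\<^sup>L (restrict_space lborel {F c..<F d}) (\<lambda>s. g (K s)))"
proof -
  define L where "L = restrict_space lborel {F c..<F d}"
  have "finite_measure L" unfolding L_def by (rule finite_measure_restrict_lborel_Ico)
  moreover have "(\<lambda>s. g (K s)) \<in> borel_measurable L"
    using measurable_compose[OF measurable_restrict_space2[OF _ K_meas]
        borel_measurable_continuous_on_restrict[OF g]] K_in by (auto simp: L_def)
  moreover obtain C where C: "\<And>x. x \<in> {c..d} \<Longrightarrow> norm (g x) \<le> C"
    using compact_imp_bounded[OF compact_continuous_image[OF g compact_Icc]]
    unfolding bounded_iff by blast
  ultimately have int_gK: "integrable L (\<lambda>s. g (K s))"
    using K_in by (intro finite_measure.integrable_const_bound[where B=C]) (auto simp: L_def)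
  show ?thesis
    unfolding has_rs_integral_def L_def[symmetric]
  proof (intro allI impI)
    fix \<epsilon> :: real assume "\<epsilon> > 0"
    define e where "e = \<epsilon> / (\<bar>F d - F c\<bar> + 1)"
    have "e > 0" using \<open>\<epsilon> > 0\<close> by (simp add: e_def add_nonneg_pos)
    have e_small: "e * \<bar>F d - F c\<bar> < \<epsilon>"
      using \<open>\<epsilon> > 0\<close> by (simp add: e_def field_simps add_nonneg_pos)
    obtain \<delta> where "\<delta> > 0" and uc: "\<And>u v. u \<in> {c..d} \<Longrightarrow> v \<in> {c..d} \<Longrightarrow> dist u v < \<delta> \<Longrightarrow> dist (g u) (g v) < e"
      using compact_uniformly_continuous[OF g compact_Icc] \<open>e > 0\<close>
      unfolding uniformly_continuous_on_def by metis
    have osc: "\<bar>g u - g v\<bar> \<le> e" if "u \<in> {c..d}" "v \<in> {c..d}" "\<bar>u - v\<bar> < \<delta>" for u v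
      using uc[OF that(1,2)] that(3) by (simp add: dist_real_def)
    show "\<exists>\<delta>>0. \<forall>n x t. x 0 = c \<longrightarrow> x n = d \<longrightarrow>
         (\<forall>i<n. x i < x (Suc i) \<and> x (Suc i) - x i < \<delta> \<and> x i \<le> t i \<and> t i \<le> x (Suc i)) \<longrightarrow>
         \<bar>(\<Sum>i<n. g (t i) * (F (x (Suc i)) - F (x i))) - integral\<^sup>L L (\<lambda>s. g (K s))\<bar> < \<epsilon>"
    proof (intro exI[of _ \<delta>] conjI allI impI)
      fix n x t
      assume "x 0 = c" "x n = d"
        and "\<forall>i<n. x i < x (Suc i) \<and> x (Suc i) - x i < \<delta> \<and> x i \<le> t i \<and> t i \<le> x (Suc i)"
      then have "\<bar>(\<Sum>i<n. g (t i) * (F (x (Suc i)) - F (x i))) - integral\<^sup>L L (\<lambda>s. g (K s))\<bar>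
          \<le> e * \<bar>F d - F c\<bar>"
        unfolding L_def using \<open>e > 0\<close>
        by (intro rs_sum_dist_integral_image_le[OF mono K_in K_between int_gK[unfolded L_def] osc]) auto
      then show "\<bar>(\<Sum>i<n. g (t i) * (F (x (Suc i)) - F (x i))) - integral\<^sup>L L (\<lambda>s. g (K s))\<bar> < \<epsilon>"
        using e_small by simp
    qed (fact \<open>\<delta> > 0\<close>)
  qed
qed

lemma corr_measure_eq_distr:
  fixes F K :: "real \<Rightarrow> real"
  assumes "c \<le> d" and mono: "mono_on {c..d} F"
    and K_meas: "K \<in> borel_measurable (restrict_space lborel {F c..<F d})"
    and K_in: "\<And>s. s \<in> {F c..<F d} \<Longrightarrow> K s \<in> {c..d}"
    and K_between: "\<And>x y s. c \<le> x \<Longrightarrow> x \<le> y \<Longrightarrow> y \<le> d \<Longrightarrow> F x \<le> s \<Longrightarrow> s < F y \<Longrightarrow> K s \<in> {x..y}"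
  shows "corr_measure c d F = distr (restrict_space lborel {F c..<F d}) (restrict_space borel {c..d}) K"
proof (rule corr_measure_eqI[OF \<open>c \<le> d\<close>])
  let ?L = "restrict_space lborel {F c..<F d}"
  have K_meas': "K \<in> measurable ?L (restrict_space borel {c..d})"
    using K_in by (intro measurable_restrict_space2 K_meas) auto
  show "finite_measure (distr ?L (restrict_space borel {c..d}) K)"
    by (rule finite_measure.finite_measure_distr[OF finite_measure_restrict_lborel_Ico K_meas'])
  fix f :: "real \<Rightarrow> real" assume f: "continuous_on {c..d} f"
  show "has_rs_integral c d f F (integral\<^sup>L (distr ?L (restrict_space borel {c..d}) K) f)"
    using has_rs_integral_image_lebesgue[OF mono K_meas K_in K_between f]
    by (simp add: integral_distr[OF K_meas' borel_measurable_continuous_on_restrict[OF f]])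
qed simp

section \<open>The generalised inverse\<close>

definition upper_inverse :: "real \<Rightarrow> real \<Rightarrow> (real \<Rightarrow> real) \<Rightarrow> real \<Rightarrow> real" where
  "upper_inverse c d F s = Sup {x \<in> {c..d}. F x \<le> s}"

lemma bdd_above_sublevel_Icc: "bdd_above {x \<in> {c..d::real}. F x \<le> s}"
  by (rule bdd_aboveI[of _ d]) auto

lemma upper_inverse_ge: "x \<in> {c..d} \<Longrightarrow> F x \<le> s \<Longrightarrow> x \<le> upper_inverse c d F s"
  unfolding upper_inverse_def by (rule cSup_upper) (auto intro: bdd_above_sublevel_Icc)

lemma upper_inverse_le:
  assumes "x \<in> {c..d}" "F x \<le> s" "\<And>z. z \<in> {c..d} \<Longrightarrow> F z \<le> s \<Longrightarrow> z \<le> y"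
  shows "upper_inverse c d F s \<le> y"
  unfolding upper_inverse_def using assms by (intro cSup_least) auto

lemma upper_inverse_in: "c \<le> d \<Longrightarrow> F c \<le> s \<Longrightarrow> upper_inverse c d F s \<in> {c..d}"
  using upper_inverse_ge[of c c d F s] upper_inverse_le[of c c d F s d] by auto

lemma upper_inverse_between:
  assumes "mono_on {c..d} F" "c \<le> x" "x \<le> y" "y \<le> d" "F x \<le> s" "s < F y"
  shows "upper_inverse c d F s \<in> {x..y}"
proof -
  have "z \<le> y" if "z \<in> {c..d}" "F z \<le> s" for z
  proof (rule ccontr)
    assume "\<not> z \<le> y"
    then have "F y \<le> F z" using assms that by (intro mono_onD[OF assms(1)]) auto
    then show False using that assms by simp
  qed
  then show ?thesis
    using assms by (auto intro: upper_inverse_ge upper_inverse_le[of x])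
qed

lemma upper_inverse_sublevel:
  assumes "x \<in> {c..d}" "F x \<le> s"
    and left_cont: "(F \<longlongrightarrow> F (upper_inverse c d F s)) (at_left (upper_inverse c d F s))"
  shows "F (upper_inverse c d F s) \<le> s"
proof (rule ccontr)
  define Y where "Y = upper_inverse c d F s"
  define S where "S = {x \<in> {c..d}. F x \<le> s}"
  assume "\<not> F (upper_inverse c d F s) \<le> s"
  then have "s < F Y" by (simp add: Y_def)
  have "eventually (\<lambda>t. s < F t) (at_left Y)"
    using order_tendstoD(1)[OF left_cont[folded Y_def] \<open>s < F Y\<close>] .
  then obtain b where "b < Y" and above: "\<And>t. b < t \<Longrightarrow> t < Y \<Longrightarrow> s < F t"
    unfolding eventually_at_left_field by blast
  have "S \<noteq> {}" using assms by (auto simp: S_def)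
  moreover have "bdd_above S" unfolding S_def by (rule bdd_above_sublevel_Icc)
  moreover have "b < Sup S" using \<open>b < Y\<close> by (simp add: Y_def upper_inverse_def S_def)
  ultimately obtain t where t: "t \<in> S" "b < t" using less_cSup_iff by blast
  have "t \<le> Y" using upper_inverse_ge t(1) by (auto simp: Y_def S_def)
  moreover have "t \<noteq> Y" using t(1) \<open>s < F Y\<close> by (auto simp: S_def)
  ultimately show False using above[OF t(2)] t(1) by (auto simp: S_def)
qed

lemma upper_inverse_borel_measurable:
  assumes "c \<le> d" "S \<subseteq> {F c..}"
  shows "upper_inverse c d F \<in> borel_measurable (restrict_space borel S)"
proof (rule borel_measurable_mono_on_fnc)
  show "mono_on S (upper_inverse c d F)"
    unfolding upper_inverse_def using assms
    by (intro mono_onI cSup_subset_mono) (auto intro: bdd_above_sublevel_Icc)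
qed

lemma upper_inverse_lborel_measurable:
  "c \<le> d \<Longrightarrow> upper_inverse c d F \<in> borel_measurable (restrict_space lborel {F c..<B})"
  unfolding measurable_cong_sets[OF sets_restrict_space_cong[OF sets_lborel] refl]
  by (rule upper_inverse_borel_measurable) auto

lemma upper_inverse_measurable:
  "c \<le> d \<Longrightarrow> F c \<le> A \<Longrightarrow>
    upper_inverse c d F \<in> restrict_space borel {A..B} \<rightarrow>\<^sub>M restrict_space borel {c..d}"
  using upper_inverse_in[of c d F]
  by (auto intro!: measurable_restrict_space2 upper_inverse_borel_measurable)

lemma corr_measure_eq_distr_upper_inverse:
  assumes "c \<le> d" "mono_on {c..d} F"
  shows "corr_measure c d F
    = distr (restrict_space lborel {F c..<F d}) (restrict_space borel {c..d}) (upper_inverse c d F)"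
  using assms upper_inverse_between[OF assms(2)]
  by (intro corr_measure_eq_distr upper_inverse_lborel_measurable upper_inverse_in) auto

section \<open>Change of variables for a composition\<close>

text \<open>If \<Xi> (G s) > y, then M is constant on [y, \<Xi> (G s)] with value G s, so G s \<in> H and
  left-continuity of N gives N (G s) \<le> s, contradicting s < N (M y).\<close>

lemma upper_inverse_comp_between:
  fixes M N :: "real \<Rightarrow> real"
  assumes mono_M: "mono_on {a..b} M" and mono_N: "mono_on {M a..M b} N"
    and left_cont: "\<And>x1 x2. x1 \<in> {a..b} \<Longrightarrow> x2 \<in> {a..b} \<Longrightarrow> x1 \<noteq> x2 \<Longrightarrow> M x1 = M x2 \<Longrightarrow>
      M x1 \<noteq> M a \<Longrightarrow> (N \<longlongrightarrow> N (M x1)) (at_left (M x1))"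
    and xy: "a \<le> x" "x \<le> y" "y \<le> b" and s: "N (M x) \<le> s" "s < N (M y)"
  shows "upper_inverse a b M (upper_inverse (M a) (M b) N s) \<in> {x..y}"
proof -
  define Y where "Y = upper_inverse (M a) (M b) N s"
  have M_in: "M z \<in> {M a..M b}" if "z \<in> {a..b}" for z
    using that by (auto intro: mono_onD[OF mono_M])
  have Y: "Y \<in> {M x..M y}"
    unfolding Y_def using M_in[of x] M_in[of y] xy s mono_onD[OF mono_M, of x y]
    by (intro upper_inverse_between[OF mono_N]) auto
  have "z \<le> y" if z: "z \<in> {a..b}" "M z \<le> Y" for z
  proof (rule ccontr)
    assume "\<not> z \<le> y"
    then have "M y \<le> M z" using z xy by (intro mono_onD[OF mono_M]) auto
    then have flat: "M z = Y" "M y = Y" using z Y by auto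
    have "Y \<noteq> M a"
    proof
      assume "Y = M a"
      then have "M x = Y" using Y M_in[of x] xy by auto
      then show False using s flat by simp
    qed
    then have "(N \<longlongrightarrow> N Y) (at_left Y)"
      using left_cont[of z y] z xy flat \<open>\<not> z \<le> y\<close> by auto
    moreover have "M x \<in> {M a..M b}" using M_in[of x] xy by auto
    ultimately have "N Y \<le> s"
      unfolding Y_def using upper_inverse_sublevel[of "M x" "M a" "M b" N s] s by blast
    then show False using s flat by simp
  qed
  then show ?thesis
    unfolding Y_def[symmetric] using xy Y by (auto intro: upper_inverse_ge upper_inverse_le[of x])
qed

lemma corr_measure_comp_eq_distr:
  fixes M N :: "real \<Rightarrow> real"
  assumes "a \<le> b" and mono_M: "mono_on {a..b} M" and mono_N: "mono_on {M a..M b} N"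
    and left_cont: "\<And>x1 x2. x1 \<in> {a..b} \<Longrightarrow> x2 \<in> {a..b} \<Longrightarrow> x1 \<noteq> x2 \<Longrightarrow> M x1 = M x2 \<Longrightarrow>
      M x1 \<noteq> M a \<Longrightarrow> (N \<longlongrightarrow> N (M x1)) (at_left (M x1))"
  shows "corr_measure a b (N \<circ> M)
    = distr (corr_measure (M a) (M b) N) (restrict_space borel {a..b}) (upper_inverse a b M)"
proof -
  define G where "G = upper_inverse (M a) (M b) N"
  define \<Xi> where "\<Xi> = upper_inverse a b M"
  let ?L = "restrict_space lborel {N (M a)..<N (M b)}"
  have M_in: "M x \<in> {M a..M b}" if "x \<in> {a..b}" for x
    using that by (auto intro: mono_onD[OF mono_M])
  have "M a \<le> M b" using M_in[of a] \<open>a \<le> b\<close> by simp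
  have G_meas: "G \<in> ?L \<rightarrow>\<^sub>M restrict_space borel {M a..M b}"
    using \<open>M a \<le> M b\<close> upper_inverse_in[of "M a" "M b" N]
    by (auto simp: G_def intro!: measurable_restrict_space2 upper_inverse_lborel_measurable)
  have \<Xi>_meas: "\<Xi> \<in> restrict_space borel {M a..M b} \<rightarrow>\<^sub>M restrict_space borel {a..b}"
    unfolding \<Xi>_def using \<open>a \<le> b\<close> by (rule upper_inverse_measurable) simp
  have "corr_measure a b (N \<circ> M)
      = distr (restrict_space lborel {(N \<circ> M) a..<(N \<circ> M) b}) (restrict_space borel {a..b}) (\<Xi> \<circ> G)"
  proof (rule corr_measure_eq_distr[OF \<open>a \<le> b\<close>])
    show "mono_on {a..b} (N \<circ> M)"
      using M_in by (intro monotone_on_o[OF mono_N mono_M]) auto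
    show "\<Xi> \<circ> G \<in> borel_measurable (restrict_space lborel {(N \<circ> M) a..<(N \<circ> M) b})"
      using measurable_comp[OF G_meas \<Xi>_meas] by (simp add: measurable_restrict_space2_iff)
    show "(\<Xi> \<circ> G) s \<in> {a..b}" if "s \<in> {(N \<circ> M) a..<(N \<circ> M) b}" for s
      using measurable_space[OF measurable_comp[OF G_meas \<Xi>_meas], of s] that by simp
    show "(\<Xi> \<circ> G) s \<in> {x..y}"
      if "a \<le> x" "x \<le> y" "y \<le> b" "(N \<circ> M) x \<le> s" "s < (N \<circ> M) y" for x y s
      unfolding \<Xi>_def G_def o_def
      by (rule upper_inverse_comp_between[OF mono_M mono_N left_cont]) (use that in auto)
  qed
  also have "\<dots> = distr (distr ?L (restrict_space borel {M a..M b}) G) (restrict_space borel {a..b}) \<Xi>"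
    by (simp add: distr_distr[OF \<Xi>_meas G_meas])
  also have "distr ?L (restrict_space borel {M a..M b}) G = corr_measure (M a) (M b) N"
    unfolding G_def by (rule corr_measure_eq_distr_upper_inverse[OF \<open>M a \<le> M b\<close> mono_N, symmetric])
  finally show ?thesis unfolding \<Xi>_def .
qed

theorem mainTheorem2:
  fixes a b :: real and M N :: "real \<Rightarrow> real"
  assumes "a < b"
    and "mono_on {a..b} M"
    and "mono_on {M a..M b} N"
    and "\<forall>y\<in>{y \<in> {M a..M b}. \<exists>x1\<in>{a..b}. \<exists>x2\<in>{a..b}. x1 \<noteq> x2 \<and> M x1 = y \<and> M x2 = y}.
           y \<noteq> M a \<longrightarrow> (N \<longlongrightarrow> N y) (at_left y)"
  shows "(\<lambda>y. Sup {x \<in> {a..b}. M x \<le> y})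
           \<in> measurable (corr_measure (M a) (M b) N) (corr_measure a b (N \<circ> M))
    \<and> (\<forall>E \<in> sets (corr_measure a b (N \<circ> M)).
          emeasure (corr_measure a b (N \<circ> M)) E
          = emeasure (corr_measure (M a) (M b) N)
              ((\<lambda>y. Sup {x \<in> {a..b}. M x \<le> y}) -` E \<inter> space (corr_measure (M a) (M b) N)))
    \<and> (\<forall>f :: real \<Rightarrow> real. f \<in> borel_measurable (restrict_space borel {a..b})
          \<longrightarrow> (\<exists>B. \<forall>x\<in>{a..b}. \<bar>f x\<bar> \<le> B)
          \<longrightarrow> integral\<^sup>L (corr_measure a b (N \<circ> M)) f
              = integral\<^sup>L (corr_measure (M a) (M b) N) (\<lambda>y. f (Sup {x \<in> {a..b}. M x \<le> y})))"
proof -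
  define \<Xi> where "\<Xi> = upper_inverse a b M"
  define \<nu> where "\<nu> = corr_measure (M a) (M b) N"
  have M_in: "M x \<in> {M a..M b}" if "x \<in> {a..b}" for x
    using that by (auto intro: mono_onD[OF assms(2)])
  have "M a \<le> M b" using M_in[of a] \<open>a < b\<close> by simp
  have left_cont: "(N \<longlongrightarrow> N (M x1)) (at_left (M x1))"
    if "x1 \<in> {a..b}" "x2 \<in> {a..b}" "x1 \<noteq> x2" "M x1 = M x2" "M x1 \<noteq> M a" for x1 x2
  proof -
    have "M x1 \<in> {y \<in> {M a..M b}. \<exists>x1\<in>{a..b}. \<exists>x2\<in>{a..b}. x1 \<noteq> x2 \<and> M x1 = y \<and> M x2 = y}"
      using M_in[OF that(1)] that(1-4) by (intro CollectI conjI bexI[of _ x1] bexI[of _ x2]) auto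
    then show ?thesis using assms(4) that(5) by blast
  qed
  have comp_distr: "corr_measure a b (N \<circ> M) = distr \<nu> (restrict_space borel {a..b}) \<Xi>"
    unfolding \<nu>_def \<Xi>_def using \<open>a < b\<close> assms(2,3) left_cont
    by (intro corr_measure_comp_eq_distr) auto
  have sets_\<nu>: "sets \<nu> = sets (restrict_space borel {M a..M b})"
    unfolding \<nu>_def by (simp add: corr_measure_eq_distr_upper_inverse[OF \<open>M a \<le> M b\<close> assms(3)])
  have \<Xi>_meas: "\<Xi> \<in> \<nu> \<rightarrow>\<^sub>M restrict_space borel {a..b}"
    unfolding measurable_cong_sets[OF sets_\<nu> refl] \<Xi>_def
    using \<open>a < b\<close> by (intro upper_inverse_measurable) auto
  have Sup_eq: "Sup {x \<in> {a..b}. M x \<le> y} = \<Xi> y" for y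
    by (simp add: \<Xi>_def upper_inverse_def)
  show ?thesis
    unfolding Sup_eq comp_distr \<nu>_def[symmetric]
    using \<Xi>_meas emeasure_distr[OF \<Xi>_meas] integral_distr[OF \<Xi>_meas] by auto
qed

end
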